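(* Let $U_1,U_2,\dots$ be i.i.d. almost surely positive random variables distributed as $U$ with tail function $Q(x)=\mathbb{P}(U>x)$, and assume $\mathbb{E}[U^2]<\infty$ and that there exist $\beta\in(0,1/2)$ and $x_0>0$ in the interior of the support of $U$ such that $Q^{1/2-\beta}$ is convex on $[x_0,\infty)$. Let $V_1\le\dots\le V_N$ be the order statistics of $(U_1,\dots,U_N)$ and \[D_N=\Big\{V_{N-1}\le V_N\Big(1-\Big(\frac{V_{N-1}}{\sqrt N}\Big)^{1-\beta}\Big)\Big\}.\] Then $\mathbb{P}(D_N)\to1$ as $N\to\infty$. *)

theory Defs
  imports "HOL-Probability.Probability"
begin

definition rv_support :: "'a measure \<Rightarrow> ('a \<Rightarrow> real) \<Rightarrow> real set" where
  "rv_support M X = {x. \<forall>e>0. measure M {\<omega> \<in> space M. X \<omega> \<in> ball x e} > 0}"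

definition tail_fun :: "'a measure \<Rightarrow> ('a \<Rightarrow> real) \<Rightarrow> real \<Rightarrow> real" where
  "tail_fun M X x = measure M {\<omega> \<in> space M. X \<omega> > x}"

text \<open>k-th order statistic (1-based, increasing) of U 0, ..., U (N-1) at \<omega>;
so order_stat U N N is the maximum and order_stat U N (N-1) the second largest.\<close>
definition order_stat :: "(nat \<Rightarrow> 'a \<Rightarrow> real) \<Rightarrow> nat \<Rightarrow> nat \<Rightarrow> 'a \<Rightarrow> real" where
  "order_stat U N k \<omega> = sort (map (\<lambda>i. U i \<omega>) [0..<N]) ! (k - 1)"

end

theory Submission
  imports Defs "HOL-Real_Asymp.Real_Asymp"
begin

text \<open>
  Fix K > 0 and let t be the level with Q(t) = K/N. If D_N fails, then one of three things
  happens: at most one sample exceeds t, which has probability at most (1 + K) e^(-K/2); some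
  sample exceeds \<epsilon> sqrt N, which has probability N Q(\<epsilon> sqrt N) \<rightarrow> 0 because E U^2 < \<infinity>; or
  two distinct samples satisfy t < U_j \<le> U_i \<le> U_j + 2 U_j (U_j / sqrt N)^(1-\<beta>) with
  U_j \<le> \<epsilon> sqrt N. Convexity of Q^(1/2-\<beta>) together with Chebyshev's bound Q(x) \<le> E U^2 / x^2
  gives Q(y) - Q(y + h) = O(Q(y)^(1/2+\<beta>) h y^(2\<beta>-2)), so each of the N^2 pairs has probability
  O(K^(3/2+\<beta>) \<epsilon>^\<beta> / N^2). Choosing K large, then \<epsilon> small, then N large proves the claim.
\<close>

lemma sorted_nth_le_iff_less_length_filter:
  fixes xs :: "'a::linorder list"
  assumes "sorted xs" "k < length xs"
  shows "xs ! k \<le> a \<longleftrightarrow> k < length (filter (\<lambda>x. x \<le> a) xs)"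
  using assms
proof (induction xs arbitrary: k)
  case Nil
  then show ?case by simp
next
  case (Cons y ys)
  show ?case
  proof (cases "y \<le> a")
    case True
    then show ?thesis using Cons by (cases k) auto
  next
    case False
    then have "filter (\<lambda>x. x \<le> a) (y # ys) = []"
      using Cons.prems(1) by (auto simp: filter_empty_conv)
    moreover have "a < (y # ys) ! k"
      using Cons.prems False by (cases k) (auto, meson dual_order.trans nth_mem not_le)
    ultimately show ?thesis by simp
  qed
qed

lemma order_stat_le_iff:
  assumes "1 \<le> k" "k \<le> N"
  shows "order_stat U N k \<omega> \<le> a \<longleftrightarrow> k \<le> card {i. i < N \<and> U i \<omega> \<le> a}"
proof -
  define xs where "xs = map (\<lambda>i. U i \<omega>) [0..<N]"
  have "order_stat U N k \<omega> \<le> a \<longleftrightarrow> k - 1 < length (filter (\<lambda>x. x \<le> a) (sort xs))"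
    unfolding order_stat_def xs_def[symmetric]
    by (rule sorted_nth_le_iff_less_length_filter) (use assms in \<open>auto simp: xs_def\<close>)
  also have "length (filter (\<lambda>x. x \<le> a) (sort xs)) = length (filter (\<lambda>x. x \<le> a) xs)"
    by (metis mset_filter mset_sort size_mset)
  also have "\<dots> = card {i. i < N \<and> U i \<omega> \<le> a}"
    unfolding length_filter_conv_card by (auto simp: xs_def intro!: arg_cong[where f = card])
  finally show ?thesis using assms by linarith
qed

lemma order_stat_top_two_indices:
  assumes "2 \<le> N"
  obtains i j where "i < N" "j < N" "i \<noteq> j"
    "order_stat U N N \<omega> = U i \<omega>" "order_stat U N (N - 1) \<omega> = U j \<omega>" "U j \<omega> \<le> U i \<omega>"
proof -
  define xs where "xs = map (\<lambda>i. U i \<omega>) [0..<N]"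
  have len: "length xs = N" by (simp add: xs_def)
  obtain p where p: "p permutes {..<N}" "permute_list p xs = sort xs"
    using mset_eq_permutation[of "sort xs" xs] len by auto
  have p_lt: "p k < N" if "k < N" for k
    using permutes_in_image[OF p(1)] that by auto
  have sort_nth: "sort xs ! k = U (p k) \<omega>" if "k < N" for k
    using permute_list_nth[of p xs k] p len that p_lt[OF that] by (auto simp: xs_def)
  have "N - 1 \<noteq> N - 2"
    using assms by arith
  then have "p (N - 1) \<noteq> p (N - 2)"
    using permutes_inj[OF p(1)] by (metis injD)
  moreover have "sort xs ! (N - 2) \<le> sort xs ! (N - 1)"
    by (rule sorted_nth_mono) (use assms len in auto)
  moreover have "order_stat U N N \<omega> = sort xs ! (N - 1)"
    and "order_stat U N (N - 1) \<omega> = sort xs ! (N - 2)"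
    by (simp_all add: order_stat_def xs_def diff_diff_left numeral_2_eq_2)
  ultimately show ?thesis
    using that[of "p (N - 1)" "p (N - 2)"] assms p_lt[of "N - 1"] p_lt[of "N - 2"]
      sort_nth[of "N - 1"] sort_nth[of "N - 2"]
    by simp
qed

lemma order_stat_second_le_cases:
  assumes "2 \<le> N" "order_stat U N (N - 1) \<omega> \<le> t"
  shows "(\<forall>k<N. U k \<omega> \<le> t) \<or> (\<exists>i<N. t < U i \<omega> \<and> (\<forall>k<N. k \<noteq> i \<longrightarrow> U k \<omega> \<le> t))"
proof (cases "\<forall>k<N. U k \<omega> \<le> t")
  case False
  then obtain i where i: "i < N" "t < U i \<omega>"
    by (auto simp: not_le)
  have "N - 1 \<le> card {k. k < N \<and> U k \<omega> \<le> t}"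
    using order_stat_le_iff[of "N - 1" N U \<omega> t] assms by auto
  moreover have "{k. k < N \<and> U k \<omega> \<le> t} \<subseteq> {..<N} - {i}"
    using i by auto
  moreover have "card ({..<N} - {i}) = N - 1"
    using i by simp
  ultimately have "{k. k < N \<and> U k \<omega> \<le> t} = {..<N} - {i}"
    using card_mono[of "{..<N} - {i}" "{k. k < N \<and> U k \<omega> \<le> t}"]
    by (intro card_subset_eq) auto
  then have "\<forall>k<N. k \<noteq> i \<longrightarrow> U k \<omega> \<le> t"
    by (auto simp: set_eq_iff)
  then show ?thesis
    using i by blast
qed simp

lemma borel_measurable_order_stat:
  assumes [measurable]: "\<And>i. U i \<in> borel_measurable M" and "1 \<le> k" "k \<le> N"
  shows "order_stat U N k \<in> borel_measurable M"
proof (rule borel_measurableI_le)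
  fix a
  have count: "real (card {i. i < N \<and> U i \<omega> \<le> a}) = (\<Sum>i<N. if U i \<omega> \<le> a then 1 else 0)" for \<omega>
    by (simp add: sum.If_cases Collect_conj_eq lessThan_def Int_commute)
  have "{\<omega> \<in> space M. order_stat U N k \<omega> \<le> a}
      = {\<omega> \<in> space M. real k \<le> (\<Sum>i<N. if U i \<omega> \<le> a then 1 else 0)}"
    by (intro Collect_cong conj_cong refl) (simp add: order_stat_le_iff[OF assms(2,3)] flip: count)
  also have "\<dots> \<in> sets M" by measurable
  finally show "{\<omega> \<in> space M. order_stat U N k \<omega> \<le> a} \<in> sets M" .
qed

lemma powr_diff_le_mean_value:
  fixes u v p :: real
  assumes "0 \<le> v" "v \<le> u" "1 \<le> p"
  shows "u powr p - v powr p \<le> p * u powr (p - 1) * (u - v)"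
proof (cases "v = u")
  case False
  then have "v < u" using assms by simp
  show ?thesis
  proof (cases "v = 0")
    case True
    have "u powr p = u powr (p - 1) * u"
      using \<open>v < u\<close> True by (simp add: powr_diff)
    also have "\<dots> \<le> p * u powr (p - 1) * u"
      using \<open>v < u\<close> True assms by (simp add: mult_right_mono)
    finally show ?thesis using True by simp
  next
    case False
    obtain z where z: "v < z" "z < u" "u powr p - v powr p = (u - v) * (p * z powr (p - 1))"
      using MVT2[OF \<open>v < u\<close>, of "\<lambda>x. x powr p" "\<lambda>x. p * x powr (p - 1)"] assms False
      by (force intro!: derivative_eq_intros)
    have "z powr (p - 1) \<le> u powr (p - 1)"
      using z assms by (intro powr_mono2) auto
    then have "(u - v) * (p * z powr (p - 1)) \<le> (u - v) * (p * u powr (p - 1))"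
      using \<open>v < u\<close> assms by (intro mult_left_mono) auto
    then show ?thesis
      using z by (simp add: algebra_simps)
  qed
qed simp

lemma diff_le_powr_diff:
  fixes u v c :: real
  assumes "0 \<le> v" "v \<le> u" "0 < c" "c \<le> 1"
  shows "u - v \<le> u powr (1 - c) * (u powr c - v powr c) / c"
proof -
  have root: "x = (x powr c) powr (1 / c)" if "0 \<le> x" for x
    using that assms by (cases "x = 0") (auto simp: powr_powr)
  have "(u powr c) powr (1 / c) - (v powr c) powr (1 / c)
      \<le> 1 / c * (u powr c) powr (1 / c - 1) * (u powr c - v powr c)"
    using assms by (intro powr_diff_le_mean_value powr_mono2) auto
  also have "(u powr c) powr (1 / c - 1) = u powr (1 - c)"
    using assms by (simp add: powr_powr algebra_simps)
  finally show ?thesis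
    using root[of u] root[of v] assms by simp
qed

lemma convex_on_decrement_le:
  fixes g :: "real \<Rightarrow> real"
  assumes "convex_on I g" "a \<in> I" "y + h \<in> I" "a < y" "0 \<le> h"
  shows "(y - a) * (g y - g (y + h)) \<le> h * (g a - g y)"
proof -
  define D where "D = y + h - a"
  define t where "t = (y - a) / D"
  have D: "0 < D" and tD: "t * D = y - a" and t: "0 \<le> t" "t \<le> 1"
    using assms by (auto simp: D_def t_def)
  have "(1 - t) *\<^sub>R a + t *\<^sub>R (y + h) = y"
    using tD by (simp add: D_def algebra_simps)
  then have "g y \<le> (1 - t) * g a + t * g (y + h)"
    using convex_onD[OF assms(1) t assms(2,3)] by simp
  then have "D * g y \<le> D * g a - (t * D) * g a + (t * D) * g (y + h)"
    using D mult_left_mono[of _ _ D] by (fastforce simp: algebra_simps)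
  then show ?thesis
    unfolding tD by (simp add: D_def algebra_simps)
qed

lemma continuous_on_if_convex_on_powr:
  fixes f :: "real \<Rightarrow> real"
  assumes "\<And>x. 0 \<le> f x" "0 < c" "convex_on {a..} (\<lambda>x. f x powr c)"
  shows "continuous_on {a<..} f"
proof -
  have "continuous_on {a<..} (\<lambda>x. f x powr c)"
    by (rule convex_on_continuous) (auto intro: convex_on_subset[OF assms(3)])
  then have "continuous_on {a<..} (\<lambda>x. (f x powr c) powr (1 / c))"
    by (rule continuous_on_powr') (use assms in auto)
  moreover have "(f x powr c) powr (1 / c) = f x" for x
    using assms(1)[of x] assms(2) by (cases "f x = 0") (auto simp: powr_powr)
  ultimately show ?thesis by simp
qed

lemma tendsto_0_at_top_attains:
  fixes f :: "real \<Rightarrow> real"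
  assumes "continuous_on {a<..} f" "(f \<longlongrightarrow> 0) at_top" "a < b" "0 < q" "q \<le> f b"
  obtains t where "b \<le> t" "f t = q"
proof -
  obtain T0 where T0: "\<And>x. T0 \<le> x \<Longrightarrow> f x < q"
    using order_tendstoD(2)[OF assms(2,4)] by (auto simp: eventually_at_top_linorder)
  have "\<exists>t. b \<le> t \<and> t \<le> max T0 b \<and> f t = q"
    using assms T0[of "max T0 b"]
    by (intro IVT2') (auto intro: continuous_on_subset[OF assms(1)])
  then show ?thesis using that by blast
qed

lemma le_add_mult_if_mult_one_minus_less:
  fixes u v r :: real
  assumes "0 < v" "0 \<le> r" "r \<le> 1/2" "u * (1 - r) < v"
  shows "u \<le> v + 2 * v * r"
proof (cases "u \<le> v")
  case True
  then show ?thesis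
    using assms by (simp add: add_increasing2)
next
  case False
  then have "u < 2 * v"
    using assms mult_left_mono[of "1/2" "1 - r" u] by linarith
  then have "u * r \<le> 2 * v * r"
    using assms by (simp add: mult_right_mono)
  moreover have "u - u * r < v"
    using assms(4) by (simp add: algebra_simps)
  ultimately show ?thesis by linarith
qed

lemma one_minus_div_power_le_exp:
  fixes K :: real and N :: nat
  assumes "2 \<le> N" "0 \<le> K" "K / N \<le> 1"
  shows "(1 - K / N) ^ (N - 1) \<le> exp (- K / 2)"
proof -
  have "(1 - K / N) ^ (N - 1) \<le> exp (- K / N) ^ (N - 1)"
    using assms exp_ge_add_one_self[of "- K / N"] by (intro power_mono) auto
  also have "\<dots> = exp (- (real (N - 1) * K / N))"
    by (simp flip: exp_of_nat_mult)
  also have "\<dots> \<le> exp (- K / 2)"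
    using assms mult_left_mono[of "real N" "2 * real (N - 1)" K]
    by (simp add: field_simps)
  finally show ?thesis .
qed

lemma powr_one_minus_le_half:
  fixes x \<beta> :: real
  assumes "0 \<le> x" "x \<le> 1/4" "\<beta> \<le> 1/2"
  shows "x powr (1 - \<beta>) \<le> 1/2"
proof -
  have "x powr (1 - \<beta>) \<le> (1/4) powr (1 - \<beta>)"
    using assms by (intro powr_mono2) auto
  also have "\<dots> \<le> (1/4) powr (1/2)"
    using assms by (intro powr_mono') auto
  also have "(1/4 :: real) powr (1/2) = 1/2"
    by (simp add: powr_half_sqrt real_sqrt_divide)
  finally show ?thesis .
qed

lemma ex_pos_mult_powr_less:
  fixes D \<eta> \<beta> :: real
  assumes "0 \<le> D" "0 < \<eta>" "0 < \<beta>"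
  obtains \<epsilon> where "0 < \<epsilon>" "\<epsilon> \<le> 1/4" "D * \<epsilon> powr \<beta> < \<eta>"
proof -
  define \<epsilon> where "\<epsilon> = min (1/4) ((\<eta> / (D + 1)) powr (1 / \<beta>))"
  have \<epsilon>: "0 < \<epsilon>" "\<epsilon> \<le> 1/4"
    using assms by (auto simp: \<epsilon>_def)
  have "\<epsilon> powr \<beta> \<le> ((\<eta> / (D + 1)) powr (1 / \<beta>)) powr \<beta>"
    using assms \<epsilon> by (intro powr_mono2) (auto simp: \<epsilon>_def)
  also have "\<dots> = \<eta> / (D + 1)"
    using assms by (simp add: powr_powr)
  finally have "D * \<epsilon> powr \<beta> \<le> D * (\<eta> / (D + 1))"
    using assms by (intro mult_left_mono)
  also have "\<dots> < \<eta>"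
    using assms by (simp add: field_simps)
  finally show ?thesis
    using that \<epsilon> by blast
qed

lemma window_scaling:
  fixes K N y \<beta> :: real
  assumes "0 < K" "0 < N" "0 < y"
  shows "(K / N) powr (1/2 + \<beta>) * (2 * y * (y / sqrt N) powr (1 - \<beta>)) / y powr (2 - 2 * \<beta>)
       = 2 * K powr (1/2 + \<beta>) * (y / sqrt N) powr \<beta> / N"
proof -
  have "ln ((K / N) powr (1/2 + \<beta>) * (2 * y * (y / sqrt N) powr (1 - \<beta>)) / y powr (2 - 2 * \<beta>))
      = ln (2 * K powr (1/2 + \<beta>) * (y / sqrt N) powr \<beta> / N)"
    using assms by (simp add: ln_mult ln_div ln_powr ln_sqrt field_simps)
  then show ?thesis
    using assms by (simp add: ln_inj_iff)
qed

context prob_space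
begin

lemma tail_fun_nonneg: "0 \<le> tail_fun M X x"
  by (simp add: tail_fun_def)

lemma tail_fun_le_1: "tail_fun M X x \<le> 1"
  by (simp add: tail_fun_def)

lemma tail_fun_antimono:
  assumes [measurable]: "X \<in> borel_measurable M" and "x \<le> y"
  shows "tail_fun M X y \<le> tail_fun M X x"
  unfolding tail_fun_def using assms(2) by (intro finite_measure_mono) auto

lemma tail_fun_le_second_moment:
  assumes [measurable]: "X \<in> borel_measurable M"
    and "integrable M (\<lambda>\<omega>. X \<omega> ^ 2)" "0 < x"
  shows "tail_fun M X x \<le> expectation (\<lambda>\<omega>. X \<omega> ^ 2) / x ^ 2"
proof -
  have "tail_fun M X x \<le> prob {\<omega> \<in> space M. x ^ 2 \<le> X \<omega> ^ 2}"
    unfolding tail_fun_def using assms(3) by (intro finite_measure_mono) (auto intro!: power_mono)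
  also have "\<dots> \<le> expectation (\<lambda>\<omega>. X \<omega> ^ 2) / x ^ 2"
    by (rule integral_Markov_inequality_measure) (use assms in auto)
  finally show ?thesis .
qed

lemma tail_fun_tendsto_0:
  assumes "X \<in> borel_measurable M" "integrable M (\<lambda>\<omega>. X \<omega> ^ 2)"
  shows "(tail_fun M X \<longlongrightarrow> 0) at_top"
proof (rule tendsto_sandwich[of "\<lambda>_. 0" _ _ "\<lambda>x. expectation (\<lambda>\<omega>. X \<omega> ^ 2) / x ^ 2"])
  show "\<forall>\<^sub>F x in at_top. tail_fun M X x \<le> expectation (\<lambda>\<omega>. X \<omega> ^ 2) / x ^ 2"
    using eventually_gt_at_top[of 0]
    by eventually_elim (rule tail_fun_le_second_moment[OF assms])
  have "((\<lambda>x. C / x ^ 2) \<longlongrightarrow> 0) at_top" for C :: real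
    by real_asymp
  then show "((\<lambda>x. expectation (\<lambda>\<omega>. X \<omega> ^ 2) / x ^ 2) \<longlongrightarrow> 0) at_top" .
qed (simp_all add: tail_fun_nonneg)

lemma sq_mult_tail_fun_le_truncated_moment:
  assumes [measurable]: "X \<in> borel_measurable M"
    and "integrable M (\<lambda>\<omega>. X \<omega> ^ 2)" "0 < s"
  shows "s ^ 2 * tail_fun M X s \<le> expectation (\<lambda>\<omega>. X \<omega> ^ 2 * indicator {s<..} (X \<omega>))"
proof -
  have "integrable M (\<lambda>\<omega>. X \<omega> ^ 2 * indicator {s<..} (X \<omega>))"
    by (rule Bochner_Integration.integrable_bound[OF assms(2)]) (auto simp: indicator_def)
  then have "prob {\<omega> \<in> space M. s ^ 2 \<le> X \<omega> ^ 2 * indicator {s<..} (X \<omega>)}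
      \<le> expectation (\<lambda>\<omega>. X \<omega> ^ 2 * indicator {s<..} (X \<omega>)) / s ^ 2"
    using assms(3) by (intro integral_Markov_inequality_measure) (auto simp: indicator_def)
  moreover have "tail_fun M X s
      \<le> prob {\<omega> \<in> space M. s ^ 2 \<le> X \<omega> ^ 2 * indicator {s<..} (X \<omega>)}"
    unfolding tail_fun_def using assms(3)
    by (intro finite_measure_mono) (auto intro!: power_mono simp: indicator_def)
  ultimately have "tail_fun M X s \<le> expectation (\<lambda>\<omega>. X \<omega> ^ 2 * indicator {s<..} (X \<omega>)) / s ^ 2"
    by (rule order.trans[rotated])
  then show ?thesis
    using assms(3) by (simp add: field_simps)
qed

lemma tendsto_mult_tail_fun_sqrt:
  assumes "X \<in> borel_measurable M" "integrable M (\<lambda>\<omega>. X \<omega> ^ 2)" "0 < \<epsilon>"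
  shows "(\<lambda>N. real N * tail_fun M X (\<epsilon> * sqrt (real N))) \<longlonglongrightarrow> 0"
proof -
  define s where "s N = \<epsilon> * sqrt (real N)" for N :: nat
  define F where "F N = expectation (\<lambda>\<omega>. X \<omega> ^ 2 * indicator {s N<..} (X \<omega>))" for N
  have "filterlim s at_top sequentially"
    unfolding s_def using assms(3) by real_asymp
  then have beyond: "eventually (\<lambda>N. X \<omega> < s N) sequentially" for \<omega>
    by (simp add: filterlim_at_top_dense)
  have "(\<lambda>N. X \<omega> ^ 2 * indicator {s N<..} (X \<omega>)) \<longlonglongrightarrow> 0" for \<omega>
    by (rule tendsto_eventually, rule eventually_mono[OF beyond[of \<omega>]]) (simp add: indicator_def)
  then have "F \<longlonglongrightarrow> expectation (\<lambda>_. 0)"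
    unfolding F_def using assms
    by (intro integral_dominated_convergence[where w = "\<lambda>\<omega>. X \<omega> ^ 2"])
      (auto simp: indicator_def)
  then have F: "(\<lambda>N. F N / \<epsilon> ^ 2) \<longlonglongrightarrow> 0"
    by (auto intro: tendsto_divide_zero)
  show ?thesis
  proof (rule tendsto_sandwich[OF _ _ tendsto_const F])
    show "\<forall>\<^sub>F N in sequentially. real N * tail_fun M X (\<epsilon> * sqrt (real N)) \<le> F N / \<epsilon> ^ 2"
      using eventually_gt_at_top[of "0::nat"]
    proof eventually_elim
      case (elim N)
      have "\<epsilon> ^ 2 * (real N * tail_fun M X (s N)) \<le> F N"
        using sq_mult_tail_fun_le_truncated_moment[OF assms(1,2), of "s N"] elim assms(3)
        unfolding F_def s_def by (simp add: power_mult_distrib mult.assoc)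
      then show ?case
        using assms(3) unfolding s_def by (simp add: field_simps)
    qed
  qed (simp add: tail_fun_nonneg)
qed

lemma prob_ge_eq_tail_fun:
  assumes [measurable]: "X \<in> borel_measurable M" and "isCont (tail_fun M X) y"
  shows "prob {\<omega> \<in> space M. y \<le> X \<omega>} = tail_fun M X y"
proof -
  define A where "A n = {\<omega> \<in> space M. y - inverse (real (Suc n)) < X \<omega>}" for n
  have "A n \<subseteq> A m" if "m \<le> n" for m n
  proof -
    have "inverse (real (Suc n)) \<le> inverse (real (Suc m))"
      by (rule le_imp_inverse_le) (use that in auto)
    then have "y - inverse (real (Suc m)) \<le> y - inverse (real (Suc n))"
      by (rule diff_left_mono)
    then show ?thesis
      unfolding A_def by (blast intro: order.strict_trans1)
  qed
  then have "decseq A"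
    by (simp add: decseq_def)
  moreover have "range A \<subseteq> sets M"
    by (auto simp: A_def)
  ultimately have "(\<lambda>n. prob (A n)) \<longlonglongrightarrow> prob (\<Inter>n. A n)"
    by (intro finite_Lim_measure_decseq)
  moreover have "(\<Inter>n. A n) = {\<omega> \<in> space M. y \<le> X \<omega>}"
  proof (intro equalityI subsetI)
    fix \<omega> assume \<omega>: "\<omega> \<in> (\<Inter>n. A n)"
    have "y \<le> X \<omega>"
    proof (rule ccontr)
      assume "\<not> y \<le> X \<omega>"
      then obtain n where "inverse (real (Suc n)) < y - X \<omega>"
        using reals_Archimedean[of "y - X \<omega>"] by auto
      moreover have "y - inverse (real (Suc n)) < X \<omega>"
        using \<omega> by (auto simp: A_def)
      ultimately show False by linarith
    qed
    then show "\<omega> \<in> {\<omega> \<in> space M. y \<le> X \<omega>}" using \<omega> by (auto simp: A_def)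
  qed (auto simp: A_def, smt (verit) of_nat_0_le_iff inverse_positive_iff_positive)
  moreover have "(\<lambda>n. prob (A n)) \<longlonglongrightarrow> tail_fun M X y"
  proof -
    have "(\<lambda>n. y - inverse (real (Suc n))) \<longlonglongrightarrow> y"
      using tendsto_diff[OF tendsto_const LIMSEQ_inverse_real_of_nat, of y] by simp
    then show ?thesis
      unfolding A_def tail_fun_def[symmetric] using assms(2) by (rule isCont_tendsto_compose[rotated])
  qed
  ultimately show ?thesis
    using LIMSEQ_unique by metis
qed

lemma prob_Icc_eq_tail_fun_diff:
  assumes [measurable]: "X \<in> borel_measurable M" and "isCont (tail_fun M X) y" "0 \<le> h"
  shows "prob {\<omega> \<in> space M. y \<le> X \<omega> \<and> X \<omega> \<le> y + h} = tail_fun M X y - tail_fun M X (y + h)"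
proof -
  have "{\<omega> \<in> space M. y \<le> X \<omega> \<and> X \<omega> \<le> y + h}
      = {\<omega> \<in> space M. y \<le> X \<omega>} - {\<omega> \<in> space M. y + h < X \<omega>}"
    by auto
  also have "prob \<dots> = prob {\<omega> \<in> space M. y \<le> X \<omega>} - prob {\<omega> \<in> space M. y + h < X \<omega>}"
    using assms(3) by (intro finite_measure_Diff) auto
  finally show ?thesis
    using prob_ge_eq_tail_fun[OF assms(1,2)] by (simp add: tail_fun_def)
qed

lemma emeasure_pair_measure_le_section_bound:
  assumes "A \<in> sets (M \<Otimes>\<^sub>M M)" "S \<in> sets M"
    and section_le: "\<And>y. y \<in> space M \<Longrightarrow> emeasure M (Pair y -` A) \<le> B * indicator S y"
  shows "emeasure (M \<Otimes>\<^sub>M M) A \<le> B * emeasure M S"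
proof -
  have "emeasure (M \<Otimes>\<^sub>M M) A = (\<integral>\<^sup>+y. emeasure M (Pair y -` A) \<partial>M)"
    using assms(1) by (rule emeasure_pair_measure_alt)
  also have "\<dots> \<le> (\<integral>\<^sup>+y. B * indicator S y \<partial>M)"
    using section_le by (intro nn_integral_mono) auto
  also have "\<dots> = B * emeasure M S"
    using assms(2) by (rule nn_integral_cmult_indicator)
  finally show ?thesis .
qed

lemma tail_fun_powr_le_second_moment:
  assumes "X \<in> borel_measurable M" "integrable M (\<lambda>\<omega>. X \<omega> ^ 2)" "0 < y" "y \<le> 2 * a" "0 < c"
  shows "tail_fun M X a powr c \<le> (4 * expectation (\<lambda>\<omega>. X \<omega> ^ 2)) powr c / y powr (2 * c)"
proof -
  define E where "E = expectation (\<lambda>\<omega>. X \<omega> ^ 2)"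
  have E: "0 \<le> E"
    unfolding E_def by (intro integral_nonneg_AE) auto
  have a: "0 < a"
    using assms by simp
  have "tail_fun M X a \<le> E / a ^ 2"
    unfolding E_def using assms a by (intro tail_fun_le_second_moment) auto
  also have "\<dots> = 4 * E / (2 * a) ^ 2"
    by (simp add: power_mult_distrib)
  also have "\<dots> \<le> 4 * E / y ^ 2"
    using E assms by (intro frac_le power_mono) auto
  finally have "tail_fun M X a powr c \<le> (4 * E / y ^ 2) powr c"
    using assms by (intro powr_mono2) (auto simp: tail_fun_nonneg)
  also have "(4 * E / y ^ 2) powr c = (4 * E) powr c / (y powr 2) powr c"
    using assms E by (simp add: powr_divide)
  also have "(y powr 2) powr c = y powr (2 * c)"
    by (rule powr_powr)
  finally show ?thesis
    by (simp add: E_def)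
qed

lemma tail_fun_pos_beyond_interior_support:
  assumes [measurable]: "X \<in> borel_measurable M" and "a \<in> interior (rv_support M X)"
  obtains b where "a < b" "0 < tail_fun M X b"
proof -
  obtain e where e: "0 < e" "ball a e \<subseteq> rv_support M X"
    using assms(2) mem_interior by blast
  then have "a + e / 2 \<in> rv_support M X"
    by (auto simp: dist_real_def subset_iff)
  then have "0 < prob {\<omega> \<in> space M. X \<omega> \<in> ball (a + e / 2) (e / 4)}"
    unfolding rv_support_def using e by (auto simp del: mem_ball)
  also have "\<dots> \<le> tail_fun M X (a + e / 4)"
    unfolding tail_fun_def
    by (intro finite_measure_mono) (auto simp: dist_real_def abs_if split: if_split_asm)
  finally show ?thesis
    using e that[of "a + e / 4"] by auto
qed

end

locale iid_real_sequence = prob_space +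
  fixes U :: "nat \<Rightarrow> 'a \<Rightarrow> real"
  assumes measurable_U [measurable]: "\<And>i. U i \<in> borel_measurable M"
    and indep_U: "indep_vars (\<lambda>_. borel) U UNIV"
    and distr_U: "\<And>i. distr M borel (U i) = distr M borel (U 0)"
begin

abbreviation Q :: "real \<Rightarrow> real" where
  "Q \<equiv> tail_fun M (U 0)"

lemma prob_vimage_U: "B \<in> sets borel \<Longrightarrow> prob (U i -` B \<inter> space M) = prob (U 0 -` B \<inter> space M)"
  by (metis distr_U measurable_U measure_distr)

lemma prob_U_gt: "prob (U i -` {x<..} \<inter> space M) = Q x"
  using prob_vimage_U[of "{x<..}" i] by (simp add: tail_fun_def vimage_def Int_def conj_commute)

lemma prob_U_le: "prob (U i -` {..x} \<inter> space M) = 1 - Q x"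
proof -
  have "U i -` {..x} \<inter> space M = space M - (U i -` {x<..} \<inter> space M)"
    by auto
  then show ?thesis
    using prob_compl[of "U i -` {x<..} \<inter> space M"] prob_U_gt[of i x] by simp
qed

lemma prob_ex_U_gt_le:
  "prob (\<Union>i<N. {\<omega> \<in> space M. s < U i \<omega>}) \<le> N * Q s"
proof -
  have "prob (\<Union>i<N. {\<omega> \<in> space M. s < U i \<omega>}) \<le> (\<Sum>i<N. prob {\<omega> \<in> space M. s < U i \<omega>})"
    by (rule measure_UNION_le) auto
  also have "\<dots> = N * Q s"
    using prob_U_gt by (simp add: vimage_def Int_def conj_commute)
  finally show ?thesis .
qed

lemma prob_all_U_le:
  assumes "0 < N"
  shows "prob (\<Inter>k<N. U k -` {..t} \<inter> space M) = (1 - Q t) ^ N"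
proof -
  have "prob (\<Inter>k<N. U k -` {..t} \<inter> space M) = (\<Prod>k<N. prob (U k -` {..t} \<inter> space M))"
    using assms by (intro indep_varsD[OF indep_U]) (auto simp: lessThan_empty_iff)
  then show ?thesis
    by (simp add: prob_U_le)
qed

lemma prob_only_U_gt:
  assumes "i < N"
  shows "prob (\<Inter>k<N. U k -` (if k = i then {t<..} else {..t}) \<inter> space M) = Q t * (1 - Q t) ^ (N - 1)"
proof -
  have "prob (\<Inter>k<N. U k -` (if k = i then {t<..} else {..t}) \<inter> space M)
      = (\<Prod>k<N. prob (U k -` (if k = i then {t<..} else {..t}) \<inter> space M))"
    using assms by (intro indep_varsD[OF indep_U]) (auto simp: lessThan_empty_iff)
  also have "\<dots> = (\<Prod>k<N. if k = i then Q t else 1 - Q t)"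
    by (intro prod.cong) (simp_all add: prob_U_le prob_U_gt)
  also have "\<dots> = Q t * (1 - Q t) ^ (N - 1)"
    using assms by (simp add: prod.remove[of "{..<N}" i])
  finally show ?thesis .
qed

lemma prob_second_largest_le:
  assumes "2 \<le> N"
  shows "prob {\<omega> \<in> space M. order_stat U N (N - 1) \<omega> \<le> t} \<le> (1 - Q t) ^ (N - 1) * (1 + N * Q t)"
proof -
  define q where "q = Q t"
  have q: "0 \<le> q" "q \<le> 1"
    unfolding q_def by (simp_all add: tail_fun_nonneg tail_fun_le_1)
  define E where "E i = (\<Inter>k<N. U k -` (if k = i then {t<..} else {..t}) \<inter> space M)" for i
  define E_all where "E_all = (\<Inter>k<N. U k -` {..t} \<inter> space M)"
  have E_all_sets: "E_all \<in> sets M"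
    unfolding E_all_def using assms
    by (intro sets.finite_INT) (auto intro: measurable_sets[OF measurable_U] simp: lessThan_empty_iff)
  have E_sets: "E i \<in> sets M" for i
    unfolding E_def using assms
    by (intro sets.finite_INT) (auto intro: measurable_sets[OF measurable_U] simp: lessThan_empty_iff)
  have prob_E_all: "prob E_all = (1 - q) ^ N"
    unfolding E_all_def q_def using assms by (intro prob_all_U_le) auto
  have prob_E: "prob (E i) = q * (1 - q) ^ (N - 1)" if "i < N" for i
    unfolding E_def q_def using that by (rule prob_only_U_gt)
  have "{\<omega> \<in> space M. order_stat U N (N - 1) \<omega> \<le> t} \<subseteq> E_all \<union> (\<Union>i<N. E i)"
  proof
    fix \<omega> assume "\<omega> \<in> {\<omega> \<in> space M. order_stat U N (N - 1) \<omega> \<le> t}"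
    then have \<omega>: "\<omega> \<in> space M" and le: "order_stat U N (N - 1) \<omega> \<le> t"
      by auto
    from order_stat_second_le_cases[OF assms le] show "\<omega> \<in> E_all \<union> (\<Union>i<N. E i)"
    proof (elim disjE exE conjE)
      assume "\<forall>k<N. U k \<omega> \<le> t"
      then show ?thesis using \<omega> by (auto simp: E_all_def)
    next
      fix i assume "i < N" "t < U i \<omega>" "\<forall>k<N. k \<noteq> i \<longrightarrow> U k \<omega> \<le> t"
      then have "\<omega> \<in> E i"
        using \<omega> by (auto simp: E_def)
      then show ?thesis
        using \<open>i < N\<close> by blast
    qed
  qed
  then have "prob {\<omega> \<in> space M. order_stat U N (N - 1) \<omega> \<le> t} \<le> prob E_all + prob (\<Union>i<N. E i)"
    using E_all_sets E_sets by (intro order.trans[OF finite_measure_mono measure_Un_le]) auto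
  also have "prob (\<Union>i<N. E i) \<le> (\<Sum>i<N. prob (E i))"
    using E_sets by (intro measure_UNION_le) auto
  also have "\<dots> = N * (q * (1 - q) ^ (N - 1))"
    by (simp add: prob_E)
  also have "prob E_all \<le> (1 - q) ^ (N - 1)"
    unfolding prob_E_all using q by (intro power_decreasing) auto
  finally show ?thesis
    unfolding q_def by (simp add: algebra_simps)
qed

lemma distr_U_pair:
  assumes "i \<noteq> j"
  shows "distr M (borel \<Otimes>\<^sub>M borel) (\<lambda>\<omega>. (U j \<omega>, U i \<omega>)) = distr M borel (U 0) \<Otimes>\<^sub>M distr M borel (U 0)"
proof -
  have "indep_var (Pi\<^sub>M {j} (\<lambda>_. borel)) (\<lambda>\<omega>. restrict (\<lambda>k. U k \<omega>) {j})
      (Pi\<^sub>M {i} (\<lambda>_. borel)) (\<lambda>\<omega>. restrict (\<lambda>k. U k \<omega>) {i})"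
    by (rule indep_var_restrict[OF indep_U]) (use assms in auto)
  from indep_var_compose[OF this measurable_component_singleton measurable_component_singleton]
  have "indep_var borel (U j) borel (U i)"
    by (simp add: comp_def)
  then show ?thesis
    unfolding indep_var_distribution_eq distr_U[of i] distr_U[of j] by simp
qed

lemma prob_pair_window_le:
  fixes w :: "real \<Rightarrow> real"
  assumes "i \<noteq> j" "0 \<le> B" and [measurable]: "w \<in> borel_measurable borel"
    and window: "\<And>y. t < y \<Longrightarrow> y \<le> s \<Longrightarrow> prob {\<omega> \<in> space M. y \<le> U 0 \<omega> \<and> U 0 \<omega> \<le> y + w y} \<le> B"
  shows "prob {\<omega> \<in> space M. t < U j \<omega> \<and> U j \<omega> \<le> s \<and> U j \<omega> \<le> U i \<omega> \<and> U i \<omega> \<le> U j \<omega> + w (U j \<omega>)}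
    \<le> Q t * B"
proof -
  define P where "P = distr M borel (U 0)"
  interpret P: prob_space P
    unfolding P_def by (rule prob_space_distr) simp
  define A where "A = {p \<in> space (borel \<Otimes>\<^sub>M borel).
    t < fst p \<and> fst p \<le> s \<and> fst p \<le> snd p \<and> snd p \<le> fst p + w (fst p)}"
  have [measurable]: "A \<in> sets (borel \<Otimes>\<^sub>M borel)"
    unfolding A_def by measurable
  have event: "{\<omega> \<in> space M. t < U j \<omega> \<and> U j \<omega> \<le> s \<and> U j \<omega> \<le> U i \<omega> \<and> U i \<omega> \<le> U j \<omega> + w (U j \<omega>)}
      = (\<lambda>\<omega>. (U j \<omega>, U i \<omega>)) -` A \<inter> space M"
    by (auto simp: A_def space_pair_measure)
  have "emeasure M ((\<lambda>\<omega>. (U j \<omega>, U i \<omega>)) -` A \<inter> space M) = emeasure (P \<Otimes>\<^sub>M P) A"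
    unfolding P_def distr_U_pair[OF assms(1), symmetric] by (rule emeasure_distr[symmetric]) auto
  also have "\<dots> \<le> ennreal B * emeasure P {t<..}"
  proof (rule P.emeasure_pair_measure_le_section_bound)
    fix y
    show "emeasure P (Pair y -` A) \<le> ennreal B * indicator {t<..} y"
    proof (cases "t < y \<and> y \<le> s")
      case True
      then have "emeasure P (Pair y -` A) = emeasure M {\<omega> \<in> space M. y \<le> U 0 \<omega> \<and> U 0 \<omega> \<le> y + w y}"
        unfolding P_def
        by (subst emeasure_distr) (auto simp: A_def space_pair_measure intro!: arg_cong[where f = "emeasure M"])
      also have "\<dots> \<le> ennreal B"
        using window True by (auto simp: emeasure_eq_measure intro!: ennreal_leI)
      finally show ?thesis using True by simp
    qed (auto simp: A_def)
  qed (simp_all add: P_def)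
  also have "emeasure P {t<..} = ennreal (Q t)"
    unfolding P_def by (simp add: emeasure_distr emeasure_eq_measure tail_fun_def vimage_def Int_def conj_commute)
  finally have "emeasure M ((\<lambda>\<omega>. (U j \<omega>, U i \<omega>)) -` A \<inter> space M) \<le> ennreal (Q t * B)"
    using assms(2) tail_fun_nonneg[of "U 0" t] by (simp add: ennreal_mult mult.commute)
  then show ?thesis
    unfolding event using assms(2) tail_fun_nonneg[of "U 0" t]
    by (simp add: emeasure_eq_measure ennreal_le_iff)
qed

end

locale iid_convex_tail = iid_real_sequence +
  fixes \<beta> x0 :: real
  assumes second_moment: "integrable M (\<lambda>\<omega>. U 0 \<omega> ^ 2)"
    and \<beta>_pos: "0 < \<beta>" and \<beta>_less_half: "\<beta> < 1/2"
    and x0_pos: "0 < x0" and x0_interior: "x0 \<in> interior (rv_support M (U 0))"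
    and convex_tail: "convex_on {x0..} (\<lambda>x. Q x powr (1/2 - \<beta>))"
begin

lemma continuous_on_Q: "continuous_on {x0<..} Q"
  using continuous_on_if_convex_on_powr[OF tail_fun_nonneg _ convex_tail] \<beta>_less_half by simp

lemma isCont_Q: "x0 < y \<Longrightarrow> isCont Q y"
  using continuous_on_Q by (simp add: continuous_on_eq_continuous_at)

lemma tail_powr_decrement_le:
  assumes "x0 < x1" "x1 \<le> y" "0 \<le> h"
  shows "Q y powr (1/2 - \<beta>) - Q (y + h) powr (1/2 - \<beta>)
    \<le> (4 * expectation (\<lambda>\<omega>. U 0 \<omega> ^ 2)) powr (1/2 - \<beta>) * h
       / ((x1 - x0) / (2 * x1) * y powr (2 - 2 * \<beta>))"
proof -
  define c where "c = 1/2 - \<beta>"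
  define E where "E = expectation (\<lambda>\<omega>. U 0 \<omega> ^ 2)"
  define \<kappa> where "\<kappa> = (x1 - x0) / (2 * x1)"
  define a where "a = (x0 + y) / 2"
  have c: "0 < c" and y: "0 < y" and \<kappa>: "0 < \<kappa>" and a: "x0 \<le> a" "a < y" "y \<le> 2 * a"
    using assms x0_pos \<beta>_less_half by (auto simp: c_def \<kappa>_def a_def)
  have "(x1 - x0) * y \<le> (y - x0) * x1"
    using assms x0_pos by (simp add: algebra_simps mult_left_mono)
  then have \<kappa>_le: "\<kappa> * y \<le> y - a"
    using assms x0_pos by (simp add: \<kappa>_def a_def field_simps)
  have Qa: "Q a powr c \<le> (4 * E) powr c / y powr (2 * c)"
    unfolding E_def by (rule tail_fun_powr_le_second_moment[OF measurable_U second_moment y a(3) c])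
  have decr: "0 \<le> Q y powr c - Q (y + h) powr c"
    using assms c by (auto intro!: powr_mono2 tail_fun_antimono simp: tail_fun_nonneg)
  \<comment> \<open>Convexity compares the decrement on [y, y + h] with the secant over [a, y], whose height
    is at most Q a powr c, controlled by the second moment.\<close>
  have "\<kappa> * y * (Q y powr c - Q (y + h) powr c) \<le> (y - a) * (Q y powr c - Q (y + h) powr c)"
    using \<kappa>_le decr by (rule mult_right_mono)
  also have "\<dots> \<le> h * (Q a powr c - Q y powr c)"
    using convex_tail a assms by (intro convex_on_decrement_le) (auto simp: c_def)
  also have "\<dots> \<le> h * ((4 * E) powr c / y powr (2 * c))"
    by (intro mult_left_mono; use Qa powr_ge_zero[of "Q y" c] assms(3) in linarith)
  finally have "Q y powr c - Q (y + h) powr c \<le> (4 * E) powr c * h / (\<kappa> * (y * y powr (2 * c)))"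
    using \<kappa> y by (simp add: field_simps)
  also have "y * y powr (2 * c) = y powr (2 - 2 * \<beta>)"
    using y by (simp add: c_def powr_mult_base)
  finally show ?thesis
    by (simp add: c_def E_def \<kappa>_def)
qed

lemma tail_decrement_le:
  assumes "x0 < x1"
  obtains C where "0 \<le> C"
    "\<And>y h. x1 \<le> y \<Longrightarrow> 0 \<le> h \<Longrightarrow> Q y - Q (y + h) \<le> C * Q y powr (1/2 + \<beta>) * h / y powr (2 - 2 * \<beta>)"
proof -
  define c where "c = 1/2 - \<beta>"
  define C where "C = (4 * expectation (\<lambda>\<omega>. U 0 \<omega> ^ 2)) powr c / (c * ((x1 - x0) / (2 * x1)))"
  have c: "0 < c" "c \<le> 1"
    using \<beta>_pos \<beta>_less_half by (auto simp: c_def)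
  have "0 \<le> C"
    using assms c x0_pos by (simp add: C_def)
  moreover have "Q y - Q (y + h) \<le> C * Q y powr (1/2 + \<beta>) * h / y powr (2 - 2 * \<beta>)"
    if "x1 \<le> y" "0 \<le> h" for y h
  proof -
    have "Q y - Q (y + h) \<le> Q y powr (1 - c) * (Q y powr c - Q (y + h) powr c) / c"
      using that c by (intro diff_le_powr_diff tail_fun_antimono) (auto simp: tail_fun_nonneg)
    also have "\<dots> \<le> Q y powr (1 - c) * ((4 * expectation (\<lambda>\<omega>. U 0 \<omega> ^ 2)) powr c * h
        / ((x1 - x0) / (2 * x1) * y powr (2 - 2 * \<beta>))) / c"
      using tail_powr_decrement_le[OF assms that] c by (intro divide_right_mono mult_left_mono) (auto simp: c_def)
    also have "\<dots> = C * Q y powr (1/2 + \<beta>) * h / y powr (2 - 2 * \<beta>)"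
      by (simp add: C_def c_def ac_simps)
    finally show ?thesis .
  qed
  ultimately show ?thesis
    using that by blast
qed

definition window :: "nat \<Rightarrow> real \<Rightarrow> real" where
  "window N y = 2 * y * (y / sqrt (real N)) powr (1 - \<beta>)"

lemma borel_measurable_window [measurable]: "window N \<in> borel_measurable borel"
  unfolding window_def by measurable

definition gap_event :: "nat \<Rightarrow> 'a set" where
  "gap_event N = {\<omega> \<in> space M. order_stat U N (N - 1) \<omega>
     \<le> order_stat U N N \<omega> * (1 - (order_stat U N (N - 1) \<omega> / sqrt (real N)) powr (1 - \<beta>))}"

lemma gap_event_in_sets:
  assumes "2 \<le> N"
  shows "gap_event N \<in> sets M"
proof -
  have [measurable]: "order_stat U N N \<in> borel_measurable M" "order_stat U N (N - 1) \<in> borel_measurable M"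
    using assms by (auto intro: borel_measurable_order_stat)
  show ?thesis
    unfolding gap_event_def by measurable
qed

lemma compl_gap_event_subset:
  assumes "2 \<le> N" "0 < t" "\<epsilon> \<le> 1/4"
  shows "space M - gap_event N \<subseteq> {\<omega> \<in> space M. order_stat U N (N - 1) \<omega> \<le> t}
    \<union> (\<Union>i<N. {\<omega> \<in> space M. \<epsilon> * sqrt N < U i \<omega>})
    \<union> (\<Union>i<N. \<Union>j\<in>{..<N} - {i}. {\<omega> \<in> space M. t < U j \<omega> \<and> U j \<omega> \<le> \<epsilon> * sqrt N
        \<and> U j \<omega> \<le> U i \<omega> \<and> U i \<omega> \<le> U j \<omega> + window N (U j \<omega>)})"
proof
  fix \<omega> assume \<omega>: "\<omega> \<in> space M - gap_event N"
  obtain i j where ij: "i < N" "j < N" "i \<noteq> j" "order_stat U N N \<omega> = U i \<omega>"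
    "order_stat U N (N - 1) \<omega> = U j \<omega>" "U j \<omega> \<le> U i \<omega>"
    using order_stat_top_two_indices[OF assms(1)] by metis
  show "\<omega> \<in> {\<omega> \<in> space M. order_stat U N (N - 1) \<omega> \<le> t}
    \<union> (\<Union>i<N. {\<omega> \<in> space M. \<epsilon> * sqrt N < U i \<omega>})
    \<union> (\<Union>i<N. \<Union>j\<in>{..<N} - {i}. {\<omega> \<in> space M. t < U j \<omega> \<and> U j \<omega> \<le> \<epsilon> * sqrt N
        \<and> U j \<omega> \<le> U i \<omega> \<and> U i \<omega> \<le> U j \<omega> + window N (U j \<omega>)})"
  proof (cases "U j \<omega> \<le> t \<or> (\<exists>k<N. \<epsilon> * sqrt N < U k \<omega>)")
    case True
    then show ?thesis using \<omega> ij by auto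
  next
    case False
    then have t: "t < U j \<omega>" and below: "U i \<omega> \<le> \<epsilon> * sqrt N" "U j \<omega> \<le> \<epsilon> * sqrt N"
      using ij by auto
    define r where "r = (U j \<omega> / sqrt N) powr (1 - \<beta>)"
    have "U j \<omega> \<le> sqrt N / 4"
      using below(2) assms(3) mult_right_mono[of \<epsilon> "1/4" "sqrt N"] by simp
    then have "U j \<omega> / sqrt N \<le> 1/4"
      using assms(1) by (simp add: divide_simps)
    then have "r \<le> 1/2"
      unfolding r_def using t assms \<beta>_less_half by (intro powr_one_minus_le_half) auto
    moreover have "U i \<omega> * (1 - r) < U j \<omega>"
      using \<omega> ij by (auto simp: gap_event_def r_def)
    ultimately have "U i \<omega> \<le> U j \<omega> + window N (U j \<omega>)"
      using le_add_mult_if_mult_one_minus_less[of "U j \<omega>" r "U i \<omega>"] t assms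
      by (simp add: window_def r_def mult.assoc)
    then show ?thesis
      using \<omega> ij t below by blast
  qed
qed

lemma prob_close_pairs_le:
  assumes "x0 < t" "0 \<le> B"
    and window_le: "\<And>y. t < y \<Longrightarrow> y \<le> s \<Longrightarrow> Q y - Q (y + window N y) \<le> B"
  shows "prob (\<Union>i<N. \<Union>j\<in>{..<N} - {i}. {\<omega> \<in> space M. t < U j \<omega> \<and> U j \<omega> \<le> s
      \<and> U j \<omega> \<le> U i \<omega> \<and> U i \<omega> \<le> U j \<omega> + window N (U j \<omega>)}) \<le> real N ^ 2 * Q t * B"
proof -
  define pair where "pair i j = {\<omega> \<in> space M. t < U j \<omega> \<and> U j \<omega> \<le> s
    \<and> U j \<omega> \<le> U i \<omega> \<and> U i \<omega> \<le> U j \<omega> + window N (U j \<omega>)}" for i j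
  have [measurable]: "pair i j \<in> sets M" for i j
    unfolding pair_def by measurable
  have "prob {\<omega> \<in> space M. y \<le> U 0 \<omega> \<and> U 0 \<omega> \<le> y + window N y} \<le> B"
    if "t < y" "y \<le> s" for y
    using that assms x0_pos window_le[OF that]
    by (subst prob_Icc_eq_tail_fun_diff[OF measurable_U isCont_Q]) (auto simp: window_def)
  then have pair_le: "prob (pair i j) \<le> Q t * B" if "i \<noteq> j" for i j
    unfolding pair_def using that assms(2) by (intro prob_pair_window_le) auto
  have "prob (\<Union>i<N. \<Union>j\<in>{..<N} - {i}. pair i j) \<le> (\<Sum>i<N. prob (\<Union>j\<in>{..<N} - {i}. pair i j))"
    by (intro measure_UNION_le) auto
  also have "\<dots> \<le> (\<Sum>i<N. \<Sum>j\<in>{..<N} - {i}. prob (pair i j))"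
    by (intro sum_mono measure_UNION_le) auto
  also have "\<dots> \<le> (\<Sum>i<N. \<Sum>j\<in>{..<N} - {i}. Q t * B)"
    by (intro sum_mono pair_le) auto
  also have "\<dots> \<le> (\<Sum>i<N. \<Sum>j<N. Q t * B)"
    using assms tail_fun_nonneg[of "U 0" t] by (intro sum_mono sum_mono2) auto
  also have "\<dots> = real N ^ 2 * Q t * B"
    by (simp add: power2_eq_square)
  finally show ?thesis
    unfolding pair_def .
qed

lemma prob_compl_gap_event_le:
  assumes "2 \<le> N" "x0 < t" "\<epsilon> \<le> 1/4" "0 \<le> B"
    and window_le: "\<And>y. t < y \<Longrightarrow> y \<le> \<epsilon> * sqrt N \<Longrightarrow> Q y - Q (y + window N y) \<le> B"
  shows "prob (space M - gap_event N)
    \<le> (1 - Q t) ^ (N - 1) * (1 + N * Q t) + N * Q (\<epsilon> * sqrt N) + real N ^ 2 * Q t * B"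
proof -
  define second_low where "second_low = {\<omega> \<in> space M. order_stat U N (N - 1) \<omega> \<le> t}"
  define some_high where "some_high = (\<Union>i<N. {\<omega> \<in> space M. \<epsilon> * sqrt N < U i \<omega>})"
  define pairs where "pairs = (\<Union>i<N. \<Union>j\<in>{..<N} - {i}. {\<omega> \<in> space M. t < U j \<omega>
    \<and> U j \<omega> \<le> \<epsilon> * sqrt N \<and> U j \<omega> \<le> U i \<omega> \<and> U i \<omega> \<le> U j \<omega> + window N (U j \<omega>)})"
  have [measurable]: "order_stat U N (N - 1) \<in> borel_measurable M"
    using assms(1) by (intro borel_measurable_order_stat) auto
  have sets: "second_low \<in> sets M" "some_high \<in> sets M" "pairs \<in> sets M"
    unfolding second_low_def some_high_def pairs_def by measurable
  have "space M - gap_event N \<subseteq> second_low \<union> some_high \<union> pairs"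
    using compl_gap_event_subset[OF assms(1) _ assms(3), of t] assms x0_pos
    unfolding second_low_def some_high_def pairs_def by simp
  then have "prob (space M - gap_event N) \<le> prob (second_low \<union> some_high \<union> pairs)"
    using sets by (intro finite_measure_mono) auto
  also have "\<dots> \<le> prob second_low + prob some_high + prob pairs"
    using measure_Un_le[of "second_low \<union> some_high" M pairs] measure_Un_le[of second_low M some_high] sets
    by auto
  finally show ?thesis
    unfolding second_low_def some_high_def pairs_def
    using prob_second_largest_le[OF assms(1), of t] prob_ex_U_gt_le[where N = N and s = "\<epsilon> * sqrt N"]
      prob_close_pairs_le[where s = "\<epsilon> * sqrt N", OF assms(2,4) window_le]
    by linarith
qed

lemma tail_window_at_scale_le:
  assumes C: "0 \<le> C"
      "\<And>y h. x1 \<le> y \<Longrightarrow> 0 \<le> h \<Longrightarrow> Q y - Q (y + h) \<le> C * Q y powr (1/2 + \<beta>) * h / y powr (2 - 2 * \<beta>)"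
    and "0 < x1" "x1 \<le> t" "Q t = K / N" "0 < K" "0 < N" "t < y" "y \<le> \<epsilon> * sqrt N"
  shows "Q y - Q (y + window N y) \<le> 2 * C * K powr (1/2 + \<beta>) * \<epsilon> powr \<beta> / N"
proof -
  have y: "0 < y" "x1 \<le> y"
    using assms by auto
  have "Q y - Q (y + window N y) \<le> C * Q y powr (1/2 + \<beta>) * window N y / y powr (2 - 2 * \<beta>)"
    using C(2) y by (simp add: window_def)
  also have "\<dots> \<le> C * (K / N) powr (1/2 + \<beta>) * window N y / y powr (2 - 2 * \<beta>)"
    using C(1) y assms(6,8) \<beta>_pos unfolding assms(5)[symmetric]
    by (intro divide_right_mono mult_right_mono mult_left_mono powr_mono2 tail_fun_antimono)
      (auto simp: window_def tail_fun_nonneg)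
  also have "\<dots> = C * ((K / N) powr (1/2 + \<beta>) * window N y / y powr (2 - 2 * \<beta>))"
    by simp
  also have "\<dots> = C * (2 * K powr (1/2 + \<beta>) * (y / sqrt N) powr \<beta> / N)"
    unfolding window_def by (subst window_scaling) (use assms y in auto)
  also have "\<dots> \<le> C * (2 * K powr (1/2 + \<beta>) * \<epsilon> powr \<beta> / N)"
  proof -
    have "y / sqrt N \<le> \<epsilon>"
      using assms(7,9) by (simp add: divide_simps mult.commute)
    then have "(y / sqrt N) powr \<beta> \<le> \<epsilon> powr \<beta>"
      using y \<beta>_pos by (intro powr_mono2) auto
    then show ?thesis
      using C(1) by (intro mult_left_mono divide_right_mono) auto
  qed
  finally show ?thesis
    by (simp add: ac_simps)
qed

lemma eventually_prob_compl_gap_event_le: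
  obtains C where "0 \<le> C" "\<And>K \<epsilon>. 0 < K \<Longrightarrow> 0 < \<epsilon> \<Longrightarrow> \<epsilon> \<le> 1/4 \<Longrightarrow>
    eventually (\<lambda>N. prob (space M - gap_event N)
      \<le> exp (- K / 2) * (1 + K) + N * Q (\<epsilon> * sqrt N) + C * K powr (3/2 + \<beta>) * \<epsilon> powr \<beta>) sequentially"
proof -
  obtain x1 where x1: "x0 < x1" "0 < Q x1"
    using tail_fun_pos_beyond_interior_support[OF measurable_U x0_interior] by blast
  obtain C where C: "0 \<le> C"
    "\<And>y h. x1 \<le> y \<Longrightarrow> 0 \<le> h \<Longrightarrow> Q y - Q (y + h) \<le> C * Q y powr (1/2 + \<beta>) * h / y powr (2 - 2 * \<beta>)"
    using tail_decrement_le[OF x1(1)] by blast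
  have "eventually (\<lambda>N. prob (space M - gap_event N)
      \<le> exp (- K / 2) * (1 + K) + N * Q (\<epsilon> * sqrt N) + 2 * C * K powr (3/2 + \<beta>) * \<epsilon> powr \<beta>) sequentially"
    if K: "0 < K" and \<epsilon>: "0 < \<epsilon>" "\<epsilon> \<le> 1/4" for K \<epsilon>
  proof -
    have "((\<lambda>N. K / real N) \<longlongrightarrow> 0) sequentially"
      by real_asymp
    then have "eventually (\<lambda>N. K / real N < Q x1) sequentially"
      using x1(2) by (rule order_tendstoD)
    with eventually_ge_at_top[of 2] show ?thesis
    proof eventually_elim
      case (elim N)
      obtain t where t: "x1 \<le> t" "Q t = K / N"
        using tendsto_0_at_top_attains[OF continuous_on_Q tail_fun_tendsto_0[OF measurable_U second_moment]
            x1(1), of "K / N"] K elim by auto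
      define B where "B = 2 * C * K powr (1/2 + \<beta>) * \<epsilon> powr \<beta> / N"
      have B: "0 \<le> B"
        using C(1) K elim by (simp add: B_def)
      have window_le: "Q y - Q (y + window N y) \<le> B" if "t < y" "y \<le> \<epsilon> * sqrt N" for y
        unfolding B_def using C t x1 x0_pos K elim that by (intro tail_window_at_scale_le) auto
      have "prob (space M - gap_event N)
          \<le> (1 - Q t) ^ (N - 1) * (1 + N * Q t) + N * Q (\<epsilon> * sqrt N) + real N ^ 2 * Q t * B"
        by (rule prob_compl_gap_event_le[OF _ _ \<epsilon>(2) B window_le]) (use elim t x1 in auto)
      also have "(1 - Q t) ^ (N - 1) * (1 + N * Q t) \<le> exp (- K / 2) * (1 + K)"
      proof -
        have "(1 - Q t) ^ (N - 1) \<le> exp (- K / 2)"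
          unfolding t(2) using K elim x1 tail_fun_le_1[of "U 0" x1]
          by (intro one_minus_div_power_le_exp) linarith+
        moreover have "1 + N * Q t = 1 + K"
          using elim by (simp add: t(2))
        ultimately show ?thesis
          using K by (simp add: mult_right_mono)
      qed
      also have "real N ^ 2 * Q t * B = 2 * C * K powr (3/2 + \<beta>) * \<epsilon> powr \<beta>"
        using K elim by (simp add: t(2) B_def power2_eq_square powr_add powr_mult_base)
      finally show ?case by simp
    qed
  qed
  then show ?thesis
    using C(1) by (intro that[of "2 * C"]) auto
qed

theorem prob_gap_event_tendsto_1: "(\<lambda>N. prob (gap_event N)) \<longlonglongrightarrow> 1"
proof -
  obtain C where C: "0 \<le> C" "\<And>K \<epsilon>. 0 < K \<Longrightarrow> 0 < \<epsilon> \<Longrightarrow> \<epsilon> \<le> 1/4 \<Longrightarrow>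
    eventually (\<lambda>N. prob (space M - gap_event N)
      \<le> exp (- K / 2) * (1 + K) + N * Q (\<epsilon> * sqrt N) + C * K powr (3/2 + \<beta>) * \<epsilon> powr \<beta>) sequentially"
    using eventually_prob_compl_gap_event_le by blast
  show ?thesis
  proof (rule tendstoI)
    fix \<eta> :: real assume \<eta>: "0 < \<eta>"
    have "((\<lambda>K::real. exp (- K / 2) * (1 + K)) \<longlongrightarrow> 0) at_top"
      by real_asymp
    then have "eventually (\<lambda>K. exp (- K / 2) * (1 + K) < \<eta> / 3) at_top"
      using \<eta> by (intro order_tendstoD) auto
    then obtain K0 where K0: "\<And>K. K0 \<le> K \<Longrightarrow> exp (- K / 2) * (1 + K) < \<eta> / 3"
      by (auto simp: eventually_at_top_linorder)
    define K where "K = max K0 1"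
    have K: "0 < K" "exp (- K / 2) * (1 + K) < \<eta> / 3"
      using K0[of K] by (auto simp: K_def)
    obtain \<epsilon> where \<epsilon>: "0 < \<epsilon>" "\<epsilon> \<le> 1/4" and small: "C * K powr (3/2 + \<beta>) * \<epsilon> powr \<beta> < \<eta> / 3"
      using ex_pos_mult_powr_less[of "C * K powr (3/2 + \<beta>)" "\<eta> / 3" \<beta>] C(1) \<eta> \<beta>_pos by auto
    have "eventually (\<lambda>N. real N * Q (\<epsilon> * sqrt (real N)) < \<eta> / 3) sequentially"
      using tendsto_mult_tail_fun_sqrt[OF measurable_U second_moment \<epsilon>(1)] \<eta>
      by (intro order_tendstoD) auto
    then show "eventually (\<lambda>N. dist (prob (gap_event N)) 1 < \<eta>) sequentially"
      using C(2)[OF K(1) \<epsilon>] eventually_ge_at_top[of 2]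
    proof eventually_elim
      case (elim N)
      have "prob (space M - gap_event N) < \<eta>"
        using elim small K(2) by linarith
      then show ?case
        using prob_compl[OF gap_event_in_sets[OF elim(3)]] by (simp add: dist_real_def)
    qed
  qed
qed

end

theorem lemma6:
  fixes M :: "'a measure" and U :: "nat \<Rightarrow> 'a \<Rightarrow> real"
    and \<beta> x0 :: real
  assumes "prob_space M"
    and "\<And>i. U i \<in> borel_measurable M"
    and "prob_space.indep_vars M (\<lambda>_. borel) U UNIV"
    and "\<And>i. distr M borel (U i) = distr M borel (U 0)"
    and "\<And>i. AE \<omega> in M. U i \<omega> > 0"
    and "integrable M (\<lambda>\<omega>. (U 0 \<omega>)^2)"
    and "0 < \<beta>" and "\<beta> < 1/2"
    and "x0 > 0" and "x0 \<in> interior (rv_support M (U 0))"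
    and "convex_on {x0..} (\<lambda>x. tail_fun M (U 0) x powr (1/2 - \<beta>))"
  shows "(\<lambda>N. measure M {\<omega> \<in> space M.
            order_stat U N (N - 1) \<omega> \<le> order_stat U N N \<omega> *
              (1 - (order_stat U N (N - 1) \<omega> / sqrt (real N)) powr (1 - \<beta>))})
         \<longlonglongrightarrow> 1"
proof -
  interpret iid_convex_tail M U \<beta> x0
    by (intro iid_convex_tail.intro iid_real_sequence.intro iid_real_sequence_axioms.intro
        iid_convex_tail_axioms.intro) (fact assms)+
  show ?thesis
    using prob_gap_event_tendsto_1 by (simp add: gap_event_def)
qed

end
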